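(* Let $\alpha=\sigma_1\sigma_2^{-1}\sigma_3^{-1}\in B_4$ and let $\lambda$ be the largest positive real root of $X^4-2X^3-2X+1$ (which equals $\mathrm{GR}(\alpha)$). Then $$\lambda>\sup\{R(B_\alpha(t_0)) : t_0\in\mathbb{C},\ |t_0|=1\},$$ i.e. the inequality of Theorem 1 is strict for this $\alpha$. Equivalently, for no $t_0$ with $|t_0|=1$ does the polynomial $X^3-(1-t_0-t_0^{-1})X^2+(t_0^{-2}-t_0^{-1}+1)X+t_0^{-1}$ have a root of modulus $\ge\lambda$.
   Context: $\alpha$ acts on $F_4$ (right action) by $(x_1)\alpha=x_1x_4x_1^{-1}$, $(x_2)\alpha=x_1$, $(x_3)\alpha=x_4^{-1}x_2x_4$, $(x_4)\alpha=x_4^{-1}x_3x_4$. $B_\alpha=(\varphi(\partial((x_i)\alpha)/\partial x_k))_{i,k}$ is its Burau matrix (Fox derivatives, $\varphi(x_i)=t$), whose characteristic polynomial is $(X-1)\big(X^3-(1-t-t^{-1})X^2+(t^{-2}-t^{-1}+1)X+t^{-1}\big)$; $B_\alpha(t_0)$ is its evaluation at $t=t_0$ and $R$ the spectral radius. *)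

theory Defs
  imports "HOL-Analysis.Analysis" "Jordan_Normal_Form.Spectral_Radius"
begin

text \<open>Words in the free group F_4: a letter (i, True) is x_i, (i, False) is x_i^{-1}.\<close>
type_synonym fword = "(nat \<times> bool) list"

text \<open>Fox derivative with respect to x_k, followed by the abelianisation phi(x_i) = t,
  using the rule d(uv) = d(u) + u d(v).\<close>
fun fox_phi :: "complex \<Rightarrow> nat \<Rightarrow> fword \<Rightarrow> complex" where
  "fox_phi t k [] = 0"
| "fox_phi t k ((i, e) # w) =
     (if i = k then (if e then 1 else - inverse t) else 0)
     + (if e then t else inverse t) * fox_phi t k w"

definition alpha_img :: "nat \<Rightarrow> fword" where
  "alpha_img i = (if i = 1 then [(1, True), (4, True), (1, False)]
             else if i = 2 then [(1, True)]
             else if i = 3 then [(4, False), (2, True), (4, True)]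
             else [(4, False), (3, True), (4, True)])"

text \<open>Burau matrix B_alpha(t) = (phi(d (x_i)alpha / d x_k))_{i,k}, indices shifted to 0..3.\<close>
definition burau_alpha :: "complex \<Rightarrow> complex mat" where
  "burau_alpha t = mat 4 4 (\<lambda>(i, k). fox_phi t (k + 1) (alpha_img (i + 1)))"

definition lambda_GR :: real where
  "lambda_GR = Max {x::real. x > 0 \<and> x ^ 4 - 2 * x ^ 3 - 2 * x + 1 = 0}"

end

theory Submission
  imports Defs
begin

text \<open>For \<open>|t| = 1\<close> the eigenvalues of the Burau matrix are \<open>1\<close> and the roots of
  \<open>z\<^sup>3 + a z\<^sup>2 + a s z + s\<close> with \<open>a = 2 Re t - 1\<close> real and \<open>s = t\<^sup>-\<^sup>1\<close> of modulus one.
  This cubic is self-inversive: with \<open>\<mu>\<close> also \<open>1/cnj \<mu>\<close> is a root. For a root \<open>\<mu>\<close> off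
  the unit circle these two roots differ, and Vieta's formula for the product of the roots
  gives \<open>s = \<omega>\<^sup>2 (a + U \<omega>)\<close> with \<open>\<omega> = \<mu>/|\<mu>|\<close> and \<open>U = |\<mu>| + 1/|\<mu>|\<close>. Comparing
  moduli and real parts turns this into a real relation on the unit circle that has no
  solution with \<open>U \<ge> 68/25\<close>. Hence every eigenvalue has modulus below \<open>2.29\<close>, whereas
  \<open>\<lambda> > 2.29\<close> by the intermediate value theorem.\<close>

lemma circle_relation_bound:
  fixes c d U :: real
  assumes circle: "c^2 + d^2 = 1"
    and rel: "(U * (4*c^2 - 3) - c)^2 + d^2 = (4*c^2 - 3)^2"
  shows "U < 68/25"
proof (rule ccontr)
  assume "\<not> U < 68/25"
  hence U: "68/25 \<le> U" by simp
  define k where "k = 4*c^2 - 3"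
  define e where "e = d^2"
  have k: "k = 1 - 4*e" using circle unfolding k_def e_def by simp
  \<comment> \<open>\<open>U\<^sup>2 - 1\<close> times the relation, completed to a square in \<open>k\<close>:\<close>
  have "((U^2 - 1) * k - U * c)^2 + U^2 * e - 1
      = (U^2 - 1) * ((U * k - c)^2 + e - k^2) + (c^2 + e - 1)"
    by (simp add: algebra_simps power2_eq_square)
  hence "((U^2 - 1) * k - U * c)^2 + U^2 * e = 1"
    using circle rel unfolding k_def e_def by simp
  hence "U^2 * e \<le> 1" using zero_le_power2[of "(U^2 - 1) * k - U * c"] by linarith
  moreover have "(68/25)^2 * e \<le> U^2 * e"
    using U unfolding e_def by (intro mult_right_mono power_mono) auto
  ultimately have e_le: "e \<le> 625/4624" by (simp add: power2_eq_square)
  have e_ge: "0 \<le> e" unfolding e_def by simp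
  have c_le: "c \<le> 1 - e/2"
  proof -
    have "(1 - e/2)^2 = c^2 + e^2/4"
      using circle unfolding e_def by (simp add: power2_eq_square field_simps)
    hence "c^2 \<le> (1 - e/2)^2" by simp
    moreover have "0 \<le> 1 - e/2" using e_le by simp
    ultimately show ?thesis by (rule power2_le_imp_le)
  qed
  have k_ge: "0 \<le> k" using k e_le by simp
  have "0 \<le> 43/25 - 519/50 * e" using e_le by simp
  moreover have "43/25 - 519/50 * e \<le> 68/25 * k - c" using k c_le by linarith
  moreover have "\<dots> \<le> U * k - c" using mult_right_mono[OF U k_ge] by simp
  ultimately have "(43/25 - 519/50 * e)^2 \<le> (U * k - c)^2" by (intro power_mono) auto
  hence below: "(43/25 - 519/50 * e)^2 + e \<le> (1 - 4*e)^2"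
    using rel k unfolding k_def e_def by simp
  \<comment> \<open>On \<open>[0, E]\<close> the convex quadratic \<open>(43/25 - 519/50 e)\<^sup>2 + e - (1 - 4e)\<^sup>2\<close> decreases,
    and it is still positive at \<open>e = E\<close>.\<close>
  define E :: real where "E = 625/4624"
  have "0 \<le> (E - e) * (16692/625 - 229361/2500 * (e + E))"
    using e_ge e_le unfolding E_def by (intro mult_nonneg_nonneg) auto
  hence "0 < 1317837521/53453440000 + (E - e) * (16692/625 - 229361/2500 * (e + E))" by simp
  also have "\<dots> = 229361/2500 * e^2 - 16692/625 * e + 1224/625"
    unfolding E_def by (simp add: power2_eq_square field_simps)
  also have "\<dots> = (43/25 - 519/50 * e)^2 + e - (1 - 4*e)^2"
    by (simp add: power2_eq_square algebra_simps)
  finally show False using below by simp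
qed

lemma self_inversive_relation_bound:
  fixes s \<omega> :: complex and a U :: real
  assumes "cmod \<omega> = 1" "cmod s = 1" "s = \<omega>^2 * (of_real a + of_real U * \<omega>)"
    and "2 * Re s = a + 1"
  shows "U < 68/25"
proof -
  define c d where "c = Re \<omega>" and "d = Im \<omega>"
  define k where "k = 4*c^2 - 3"
  have circle: "c^2 + d^2 = 1"
    using assms(1) unfolding c_def d_def cmod_def by (simp add: real_sqrt_eq_1_iff)
  have d2: "d^2 = 1 - c^2" using circle by simp
  have "cmod (of_real a + of_real U * \<omega>) = 1"
    using assms(1-3) by (simp add: norm_mult norm_power)
  hence "(a + U * c)^2 + (U * d)^2 = 1"
    unfolding cmod_def c_def d_def by (simp add: real_sqrt_eq_1_iff)
  moreover have "(a + U * c)^2 + (U * d)^2 = a^2 + 2*U*c*a + U^2 * (c^2 + d^2)"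
    by (simp add: algebra_simps power2_eq_square)
  ultimately have norm_eq: "a^2 + 2*U*c*a + U^2 - 1 = 0" using circle by simp
  have "a + 1 = 2 * (a * (c^2 - d^2) + U * (c^3 - 3 * c * d^2))"
    using assms(3,4) unfolding c_def d_def
    by (simp add: power2_eq_square power3_eq_cube algebra_simps)
  hence re_eq: "a * k - 1 + 2*U*c*k = 0"
    unfolding k_def d2 by (simp add: algebra_simps power2_eq_square power3_eq_cube)
  have "(U * k - c)^2 + d^2 - k^2
      = k^2 * (a^2 + 2*U*c*a + U^2 - 1) - (a * k - 1 + 2*U*c*k) * (a * k + 1)"
    unfolding d2 by (simp add: algebra_simps power2_eq_square)
  hence "(U * k - c)^2 + d^2 = k^2" using norm_eq re_eq by simp
  thus ?thesis using circle unfolding k_def by (intro circle_relation_bound)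
qed

lemma cubic_distinct_roots_product:
  fixes a b c \<mu> \<nu> :: "'a::idom"
  assumes "\<mu>^3 + a * \<mu>^2 + b * \<mu> + c = 0" "\<nu>^3 + a * \<nu>^2 + b * \<nu> + c = 0" "\<mu> \<noteq> \<nu>"
  shows "\<mu> * \<nu> * (a + \<mu> + \<nu>) = c"
proof -
  have "(\<mu> - \<nu>) * (\<mu>^2 + \<mu> * \<nu> + \<nu>^2 + a * (\<mu> + \<nu>) + b)
      = (\<mu>^3 + a * \<mu>^2 + b * \<mu> + c) - (\<nu>^3 + a * \<nu>^2 + b * \<nu> + c)"
    by (simp add: algebra_simps power2_eq_square power3_eq_cube)
  hence "(\<mu> - \<nu>) * (\<mu>^2 + \<mu> * \<nu> + \<nu>^2 + a * (\<mu> + \<nu>) + b) = 0"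
    using assms(1,2) by simp
  hence "\<mu>^2 + \<mu> * \<nu> + \<nu>^2 + a * (\<mu> + \<nu>) + b = 0" using assms(3) by simp
  moreover have "\<mu> * \<nu> * (a + \<mu> + \<nu>) - c
      = \<mu> * (\<mu>^2 + \<mu> * \<nu> + \<nu>^2 + a * (\<mu> + \<nu>) + b) - (\<mu>^3 + a * \<mu>^2 + b * \<mu> + c)"
    by (simp add: algebra_simps power2_eq_square power3_eq_cube)
  ultimately show ?thesis using assms(1) by simp
qed

lemma self_inversive_cubic_reflect:
  fixes a :: real and s \<mu> :: complex
  assumes "cmod s = 1" "\<mu> \<noteq> 0" "\<mu>^3 + of_real a * \<mu>^2 + of_real a * s * \<mu> + s = 0"
  shows "(1 / cnj \<mu>)^3 + of_real a * (1 / cnj \<mu>)^2 + of_real a * s * (1 / cnj \<mu>) + s = 0"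
proof -
  have s_cnj: "s * cnj s = 1" using assms(1) by (simp add: complex_mult_cnj cmod_def power2_eq_square)
  have "cnj ((1 / cnj \<mu>)^3 + of_real a * (1 / cnj \<mu>)^2 + of_real a * s * (1 / cnj \<mu>) + s)
      = cnj s * (\<mu>^3 + of_real a * \<mu>^2 + of_real a * s * \<mu> + s) / \<mu>^3"
    using assms(2) s_cnj by (simp add: field_simps power2_eq_square power3_eq_cube)
  also have "\<dots> = 0" using assms(3) by simp
  finally show ?thesis by (simp only: complex_cnj_zero_iff)
qed

lemma self_inversive_cubic_root_polar:
  fixes a :: real and s \<mu> :: complex
  assumes "cmod s = 1" "1 < cmod \<mu>" "\<mu>^3 + of_real a * \<mu>^2 + of_real a * s * \<mu> + s = 0"
  shows "s = sgn \<mu> ^ 2 * (of_real a + of_real (cmod \<mu> + 1 / cmod \<mu>) * sgn \<mu>)"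
proof -
  define \<nu> where "\<nu> = 1 / cnj \<mu>"
  define r where "r = cmod \<mu>"
  have \<mu>0: "\<mu> \<noteq> 0" and r0: "r \<noteq> 0" using assms(2) unfolding r_def by auto
  have root_\<nu>: "\<nu>^3 + of_real a * \<nu>^2 + of_real a * s * \<nu> + s = 0"
    unfolding \<nu>_def using self_inversive_cubic_reflect[OF assms(1) \<mu>0 assms(3)] .
  have "cmod \<nu> = 1 / cmod \<mu>" unfolding \<nu>_def by (simp add: norm_divide)
  hence "cmod \<nu> < 1" using assms(2) by (simp add: divide_less_eq_1)
  hence "\<mu> \<noteq> \<nu>" using assms(2) by auto
  from cubic_distinct_roots_product[OF assms(3) root_\<nu> this]
  have product: "\<mu> * \<nu> * (of_real a + \<mu> + \<nu>) = s" .
  have \<nu>_eq: "\<nu> = \<mu> / of_real (r^2)"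
    unfolding \<nu>_def r_def complex_norm_square using \<mu>0 by (simp add: field_simps)
  have sgn: "sgn \<mu> = \<mu> / of_real r" unfolding r_def by (rule sgn_eq)
  have "s = (\<mu> * \<nu>) * (of_real a + (\<mu> + \<nu>))" using product by (simp add: add.assoc)
  also have "\<mu> * \<nu> = sgn \<mu> ^ 2"
    unfolding \<nu>_eq sgn using r0 by (simp add: field_simps power2_eq_square)
  also have "\<mu> + \<nu> = of_real (r + 1 / r) * sgn \<mu>"
    unfolding \<nu>_eq sgn using r0 by (simp add: field_simps power2_eq_square)
  finally show ?thesis unfolding r_def .
qed

definition burau_cubic :: "complex \<Rightarrow> complex \<Rightarrow> complex" where
  "burau_cubic t z =
     z^3 - (1 - t - inverse t) * z^2 + (inverse t ^ 2 - inverse t + 1) * z + inverse t"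

lemma burau_cubic_unit_circle:
  assumes "cmod t = 1"
  shows "burau_cubic t z =
    z^3 + of_real (2 * Re t - 1) * z^2 + of_real (2 * Re t - 1) * cnj t * z + cnj t"
proof -
  have unit: "t * cnj t = 1" using assms by (simp add: complex_mult_cnj cmod_def power2_eq_square)
  hence inv: "inverse t = cnj t" by (rule inverse_unique)
  have re: "of_real (2 * Re t - 1) = t + cnj t - 1" by (simp add: complex_add_cnj)
  have "(t + cnj t - 1) * cnj t = t * cnj t + cnj t ^ 2 - cnj t"
    by (simp add: algebra_simps power2_eq_square)
  also note unit
  finally have lin: "inverse t ^ 2 - inverse t + 1 = (t + cnj t - 1) * cnj t"
    unfolding inv by simp
  show ?thesis unfolding burau_cubic_def lin unfolding re inv by (simp add: algebra_simps)
qed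

lemma burau_cubic_root_bound:
  assumes "cmod t = 1" "burau_cubic t \<mu> = 0"
  shows "cmod \<mu> < 229/100"
proof (rule ccontr)
  assume "\<not> cmod \<mu> < 229/100"
  hence big: "229/100 \<le> cmod \<mu>" by simp
  hence pos: "0 < cmod \<mu>" by linarith
  define U where "U = cmod \<mu> + 1 / cmod \<mu>"
  have "cnj t = sgn \<mu> ^ 2 * (of_real (2 * Re t - 1) + of_real U * sgn \<mu>)"
    unfolding U_def using assms big
    by (intro self_inversive_cubic_root_polar) (auto simp: burau_cubic_unit_circle)
  hence "U < 68/25"
    by (rule self_inversive_relation_bound[rotated 2]) (use assms(1) big in \<open>auto simp: norm_sgn\<close>)
  moreover have "U - (229/100 + 100/229) = (cmod \<mu> - 229/100) * (1 - 100 / (229 * cmod \<mu>))"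
    unfolding U_def using pos by (simp add: field_simps)
  moreover have "0 \<le> (cmod \<mu> - 229/100) * (1 - 100 / (229 * cmod \<mu>))"
    using big pos by (intro mult_nonneg_nonneg) (simp_all add: field_simps)
  ultimately show False by linarith
qed

lemma burau_alpha_carrier: "burau_alpha t \<in> carrier_mat 4 4"
  unfolding burau_alpha_def by simp

lemma burau_alpha_mult_vec:
  assumes "v \<in> carrier_vec 4" "t \<noteq> 0"
  shows "vec_index (burau_alpha t *\<^sub>v v) 0 = (1 - t) * vec_index v 0 + t * vec_index v 3"
    and "vec_index (burau_alpha t *\<^sub>v v) 1 = vec_index v 0"
    and "vec_index (burau_alpha t *\<^sub>v v) 2
      = inverse t * vec_index v 1 + (1 - inverse t) * vec_index v 3"
    and "vec_index (burau_alpha t *\<^sub>v v) 3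
      = inverse t * vec_index v 2 + (1 - inverse t) * vec_index v 3"
  using assms
  by (auto simp: burau_alpha_def mult_mat_vec_def scalar_prod_def alpha_img_def row_def
      numeral_eq_Suc atLeast0LessThan lessThan_Suc algebra_simps)

lemma burau_alpha_eigenvalue:
  assumes t0: "t \<noteq> 0" and "eigenvalue (burau_alpha t) \<mu>"
  shows "\<mu> = 1 \<or> burau_cubic t \<mu> = 0"
proof -
  obtain v where v: "v \<in> carrier_vec 4" "v \<noteq> 0\<^sub>v 4" "burau_alpha t *\<^sub>v v = \<mu> \<cdot>\<^sub>v v"
    using assms(2) burau_alpha_carrier[of t] unfolding eigenvalue_def eigenvector_def by auto
  define s where "s = inverse t"
  have s0: "s \<noteq> 0" unfolding s_def using t0 by simp
  have ts: "t * s = 1" unfolding s_def using t0 by simp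
  define a b c d where "a = vec_index v 0" and "b = vec_index v 1"
    and "c = vec_index v 2" and "d = vec_index v 3"
  have eigen: "vec_index (burau_alpha t *\<^sub>v v) i = \<mu> * vec_index v i" if "i < 4" for i
    using v(1,3) that by simp
  note rows = burau_alpha_mult_vec[OF v(1) t0, folded s_def a_def b_def c_def d_def]
  have e0: "(1 - t) * a + t * d = \<mu> * a" using eigen[of 0] rows(1) unfolding a_def by simp
  have e1: "a = \<mu> * b" using eigen[of 1] rows(2) unfolding b_def by simp
  have e2: "s * b + (1 - s) * d = \<mu> * c" using eigen[of 2] rows(3) unfolding c_def by simp
  have e3: "s * c + (1 - s) * d = \<mu> * d" using eigen[of 3] rows(4) unfolding d_def by simp
  have "d \<noteq> 0"
  proof
    assume "d = 0"
    hence "c = 0" "b = 0" "a = 0" using e1 e2 e3 s0 by auto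
    hence "vec_index v i = 0" if "i < 4" for i
      using that \<open>d = 0\<close> unfolding a_def b_def c_def d_def
      by (auto simp: numeral_eq_Suc less_Suc_eq)
    hence "v = 0\<^sub>v 4" using v(1) by (intro eq_vecI) auto
    thus False using v(2) by simp
  qed
  have c: "c = t * (\<mu> - 1 + s) * d" using arg_cong[OF e3, of "(*) t"] ts
    by (simp add: algebra_simps)
  have b: "b = t * (\<mu> * c - (1 - s) * d)" using arg_cong[OF e2, of "(*) t"] ts
    by (simp add: algebra_simps)
  have "0 = (1 - t - \<mu>) * \<mu> * b + t * d" using e0 e1 by (simp add: algebra_simps)
  also have "\<dots> = - (t^2) * (\<mu> - 1) * burau_cubic t \<mu> * d"
    unfolding b c burau_cubic_def s_def using t0
    by (simp add: field_simps power2_eq_square power3_eq_cube)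
  finally show ?thesis using t0 \<open>d \<noteq> 0\<close> by simp
qed

lemma spectral_radius_le:
  assumes "A \<in> carrier_mat n n" "0 < n" "\<And>\<mu>. \<mu> \<in> spectrum A \<Longrightarrow> cmod \<mu> \<le> r"
  shows "spectral_radius A \<le> r"
  using spectral_radius_mem_max(1)[OF assms(1,2)] assms(3) by auto

lemma burau_alpha_spectral_radius_le:
  assumes "cmod t = 1"
  shows "spectral_radius (burau_alpha t) \<le> 229/100"
proof (rule spectral_radius_le[OF burau_alpha_carrier])
  fix \<mu> assume "\<mu> \<in> spectrum (burau_alpha t)"
  hence "\<mu> = 1 \<or> burau_cubic t \<mu> = 0"
    using assms by (intro burau_alpha_eigenvalue) (auto simp: spectrum_def)
  thus "cmod \<mu> \<le> 229/100" using burau_cubic_root_bound[OF assms] by force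
qed simp

lemma lambda_GR_gt: "229/100 < lambda_GR"
proof -
  define f where "f x = x ^ 4 - 2 * x ^ 3 - 2 * x + 1" for x :: real
  define S where "S = {x::real. x > 0 \<and> f x = 0}"
  have "f (229/100) < 0" "0 < f 3" unfolding f_def by (simp_all add: power_divide)
  moreover have "isCont f x" for x unfolding f_def by (intro continuous_intros)
  ultimately obtain x where "229/100 \<le> x" "x \<le> 3" "f x = 0"
    using IVT[of f "229/100" 0 3] by auto
  moreover have "x \<noteq> 229/100" using \<open>f x = 0\<close> \<open>f (229/100) < 0\<close> by (metis less_irrefl)
  ultimately have x: "229/100 < x" "x \<in> S" unfolding S_def by auto
  have "S \<subseteq> {x. poly [:1, -2, 0, -2, 1:] x = 0}"
    unfolding S_def f_def by (auto simp: algebra_simps power4_eq_xxxx power3_eq_cube)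
  hence "finite S" by (rule finite_subset) (intro poly_roots_finite, simp)
  with x have "x \<le> Max S" by simp
  with x show ?thesis unfolding lambda_GR_def S_def f_def by simp
qed

theorem mainTheorem7:
  shows "lambda_GR > Sup ((\<lambda>t. spectral_radius (burau_alpha t)) ` {t::complex. cmod t = 1})"
proof -
  have "Sup ((\<lambda>t. spectral_radius (burau_alpha t)) ` {t::complex. cmod t = 1}) \<le> 229/100"
  proof (rule cSup_least)
    have "(1::complex) \<in> {t. cmod t = 1}" by simp
    thus "(\<lambda>t. spectral_radius (burau_alpha t)) ` {t::complex. cmod t = 1} \<noteq> {}" by blast
  qed (use burau_alpha_spectral_radius_le in blast)
  also have "\<dots> < lambda_GR" by (rule lambda_GR_gt)
  finally show ?thesis .
qed

end
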